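(* Let $p\ge 5$ be a prime with $p\equiv 1\pmod 6$, and regard $r$ as an indeterminate. Let $\tilde c_1(r),\tilde c_2(r),\tilde c_3(r)\in\mathbb F_p[r]$ be the coefficients of $x^{2p-2}y^{p-1}z^{p-1}$, $x^{p-1}y^{2p-2}z^{p-1}$ and $x^{p-1}y^{p-1}z^{2p-2}$ in $(x^3z+y^4+ry^2z^2+z^4)^{p-1}$. Then: \begin{enumerate} \item Modulo $p$, $\tilde c_3(r)$ is divisible by $\tilde c_1(r)$. \item The only roots of $\tilde c_2(r)$ (in an algebraic closure of $\mathbb F_p$) are $r=\pm 2$; hence $\tilde c_2(r)\neq 0$ for every other $r$ in an algebraic closure of $\mathbb F_p$. \end{enumerate} *)

theory Defs
  imports "HOL-Computational_Algebra.Polynomial" "HOL-Number_Theory.Cong"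
begin

text \<open>Polynomials in x, y, z with coefficients in Z[r], represented as nested
univariate polynomials: the outermost variable is z, then y, then x; the
innermost coefficient ring is int poly (the indeterminate r).\<close>

type_synonym mpoly = "int poly poly poly poly"

definition zv :: mpoly where "zv = monom 1 1"
definition yv :: mpoly where "yv = [: monom 1 1 :]"
definition xv :: mpoly where "xv = [: [: monom 1 1 :] :]"
definition rv :: mpoly where "rv = [: [: [: monom 1 1 :] :] :]"

definition Fpol :: mpoly where
  "Fpol = xv ^ 3 * zv + yv ^ 4 + rv * yv ^ 2 * zv ^ 2 + zv ^ 4"

definition mcoeff :: "mpoly \<Rightarrow> nat \<Rightarrow> nat \<Rightarrow> nat \<Rightarrow> int poly" where
  "mcoeff P i j k = coeff (coeff (coeff P k) j) i"

definition c1 :: "nat \<Rightarrow> int poly" where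
  "c1 p = mcoeff (Fpol ^ (p - 1)) (2*p - 2) (p - 1) (p - 1)"
definition c2 :: "nat \<Rightarrow> int poly" where
  "c2 p = mcoeff (Fpol ^ (p - 1)) (p - 1) (2*p - 2) (p - 1)"
definition c3 :: "nat \<Rightarrow> int poly" where
  "c3 p = mcoeff (Fpol ^ (p - 1)) (p - 1) (p - 1) (2*p - 2)"

end

theory Submission
  imports Defs
begin

(* Write n = p - 1 = 6 m and Z = r^2 - 4. A monomial x^(3a) y^(4b + 2c) z^k of F^n collects a
   factors x^3 z, b factors y^4 and c factors r y^2 z^2, so along each of c1, c2, c3 the
   coefficients of r are multinomial coefficients of n, indexed by b. Modulo p = n + 1 the ratio of
   two consecutive ones equals the ratio of the corresponding coefficients of a derivative
   D^t (Z^M), so up to units mod p:  c2 ~ Z^m,  c1 ~ D^(3m) (Z^(2m)),  c3 ~ D^m (Z^(2m)).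
   The Rodrigues-type identity (3m)! D^m (Z^(2m)) = m! Z^m D^(3m) (Z^(2m)) then gives c1 | c3,
   and c2 vanishes in characteristic p exactly at r = 2 and r = -2. *)

section \<open>Coefficients of the powers of F\<close>

definition mmonom :: "int poly \<Rightarrow> nat \<Rightarrow> nat \<Rightarrow> nat \<Rightarrow> mpoly" where
  "mmonom c i j k = monom (monom (monom c i) j) k"

lemma mmonom_mult: "mmonom a i j k * mmonom b i' j' k' = mmonom (a * b) (i + i') (j + j') (k + k')"
  by (simp add: mmonom_def mult_monom)

lemma mmonom_power: "mmonom a i j k ^ n = mmonom (a ^ n) (i * n) (j * n) (k * n)"
  by (simp add: mmonom_def monom_power)

lemma of_nat_mult_mmonom: "of_nat N * mmonom a i j k = mmonom (of_nat N * a) i j k"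
proof -
  have "(of_nat N :: mpoly) = mmonom (of_nat N) 0 0 0"
    by (simp add: mmonom_def monom_0 of_nat_poly)
  then show ?thesis by (simp add: mmonom_mult)
qed

lemma mcoeff_mmonom: "mcoeff (mmonom a i j k) i' j' k' = (if i = i' \<and> j = j' \<and> k = k' then a else 0)"
  by (simp add: mmonom_def mcoeff_def)

lemma mcoeff_sum: "mcoeff (\<Sum>x\<in>A. f x) i j k = (\<Sum>x\<in>A. mcoeff (f x) i j k)"
  by (simp add: mcoeff_def coeff_sum)

lemma Fpol_eq_mmonoms:
  "Fpol = mmonom 1 3 0 1 + (mmonom 1 0 4 0 + (mmonom (monom 1 1) 0 2 2 + mmonom 1 0 0 4))"
proof -
  have vars: "xv = mmonom 1 1 0 0" "yv = mmonom 1 0 1 0" "zv = mmonom 1 0 0 1"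
    "rv = mmonom (monom 1 1) 0 0 0"
    by (simp_all add: xv_def yv_def zv_def rv_def mmonom_def monom_0 one_pCons)
  show ?thesis
    unfolding Fpol_def vars by (simp add: mmonom_power mmonom_mult add.assoc numeral_2_eq_2)
qed

definition multinomial :: "nat \<Rightarrow> nat \<Rightarrow> nat \<Rightarrow> nat \<Rightarrow> nat" where
  "multinomial n a b c = (n choose a) * ((n - a) choose b) * ((n - a - b) choose c)"

lemma Fpol_power_eq_sum:
  "Fpol ^ n = (\<Sum>a\<le>n. \<Sum>b\<le>n - a. \<Sum>c\<le>n - a - b.
     mmonom (of_nat (multinomial n a b c) * monom 1 c) (3 * a) (4 * b + 2 * c) (a + 2 * c + 4 * (n - a - b - c)))"
proof -
  have "Fpol ^ n = (\<Sum>a\<le>n. of_nat (n choose a) * mmonom 1 3 0 1 ^ a *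
     (\<Sum>b\<le>n - a. of_nat ((n - a) choose b) * mmonom 1 0 4 0 ^ b *
       (\<Sum>c\<le>n - a - b. of_nat ((n - a - b) choose c) * mmonom (monom 1 1) 0 2 2 ^ c *
          mmonom 1 0 0 4 ^ (n - a - b - c))))"
    unfolding Fpol_eq_mmonoms binomial_ring by (simp add: diff_diff_add)
  then show ?thesis
    by (simp add: sum_distrib_left sum_distrib_right mmonom_power mmonom_mult of_nat_mult_mmonom
        monom_power multinomial_def algebra_simps)
qed

lemma coeff_mcoeff_Fpol_power:
  "coeff (mcoeff (Fpol ^ n) i j k) c = (\<Sum>a\<le>n. \<Sum>b\<le>n - a.
     if c \<le> n - a - b \<and> 3 * a = i \<and> 4 * b + 2 * c = j \<and> a + 2 * c + 4 * (n - a - b - c) = k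
     then int (multinomial n a b c) else 0)"
proof -
  have sum_coeff_if: "(\<Sum>c'\<le>K. coeff (if P c' then of_nat (N c') * monom 1 c' else 0) c)
      = (if c \<le> K \<and> P c then int (N c) else 0)" for P N and K :: nat
  proof -
    have "(\<Sum>c'\<le>K. coeff (if P c' then of_nat (N c') * monom 1 c' else 0) c)
        = (\<Sum>c'\<le>K. if c' = c then if P c then int (N c) else 0 else 0)"
      by (intro sum.cong refl) (simp add: of_nat_poly monom_0[symmetric] mult_monom)
    then show ?thesis
      by simp
  qed
  show ?thesis
    unfolding Fpol_power_eq_sum mcoeff_sum mcoeff_mmonom coeff_sum sum_coeff_if
    by (simp only: conj_commute conj_left_commute)
qed

(* In the fixed monomial below, d counts how often a pair of factors r y^2 z^2 has been traded for
   one factor y^4 and one factor z^4; the coefficient of r^(s - 2 d) records exactly that term. *)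
lemma coeff_Fpol_power_eq_multinomial:
  assumes "a + b0 + s \<le> n" "2 * d \<le> s"
  shows "coeff (mcoeff (Fpol ^ n) (3 * a) (4 * b0 + 2 * s) (a + 2 * s + 4 * (n - a - b0 - s)))
           (s - 2 * d) = int (multinomial n a (b0 + d) (s - 2 * d))"
proof -
  have b_iff: "s - 2 * d \<le> n - a - b \<and> 4 * b + 2 * (s - 2 * d) = 4 * b0 + 2 * s
      \<and> a + 2 * (s - 2 * d) + 4 * (n - a - b - (s - 2 * d)) = a + 2 * s + 4 * (n - a - b0 - s)
      \<longleftrightarrow> b = b0 + d" for b
    using assms by arith
  have "(\<Sum>b\<le>n - a'. if s - 2 * d \<le> n - a' - b \<and> 3 * a' = 3 * a \<and> 4 * b + 2 * (s - 2 * d) = 4 * b0 + 2 * s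
          \<and> a' + 2 * (s - 2 * d) + 4 * (n - a' - b - (s - 2 * d)) = a + 2 * s + 4 * (n - a - b0 - s)
         then int (multinomial n a' b (s - 2 * d)) else 0)
      = (if a' = a then int (multinomial n a (b0 + d) (s - 2 * d)) else 0)" for a'
  proof (cases "a' = a")
    case True
    then show ?thesis
      using assms by (simp only: refl simp_thms b_iff) (simp add: le_diff_conv2)
  qed simp
  then show ?thesis
    using assms by (simp add: coeff_mcoeff_Fpol_power)
qed

lemma coeff_Fpol_power_nonzero_imp:
  assumes "a + b0 + s \<le> n" "b0 = 0 \<or> a + b0 + s = n"
    and "coeff (mcoeff (Fpol ^ n) (3 * a) (4 * b0 + 2 * s) (a + 2 * s + 4 * (n - a - b0 - s))) e \<noteq> 0"
  shows "\<exists>d. 2 * d \<le> s \<and> e = s - 2 * d"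
proof -
  obtain a' b where "e \<le> n - a' - b" "3 * a' = 3 * a" "4 * b + 2 * e = 4 * b0 + 2 * s"
    using assms(3) unfolding coeff_mcoeff_Fpol_power
    by (elim sum.not_neutral_contains_not_neutral) (auto split: if_splits)
  then have "2 * (b - b0) \<le> s \<and> e = s - 2 * (b - b0)"
    using assms(1,2) by auto
  then show ?thesis by blast
qed

lemma multinomial_mult_fact:
  assumes "a + b + c \<le> n"
  shows "multinomial n a b c * (fact a * fact b * fact c * fact (n - a - b - c)) = fact n"
proof -
  have "fact a * fact (n - a) * (n choose a) = fact n"
    "fact b * fact (n - a - b) * ((n - a) choose b) = fact (n - a)"
    "fact c * fact (n - a - b - c) * ((n - a - b) choose c) = fact (n - a - b)"
    using assms by (intro binomial_fact_lemma; simp)+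
  then show ?thesis
    unfolding multinomial_def by (metis (no_types, lifting) mult.assoc mult.commute)
qed

lemma multinomial_shift:
  assumes "a + b + c + 2 \<le> n"
  shows "multinomial n a (Suc b) c * (Suc b * (n - a - b - c - 1))
       = multinomial n a b (c + 2) * ((c + 2) * (c + 1))"
proof -
  obtain f where n: "n = a + b + c + 2 + f"
    using assms le_Suc_ex by blast
  define W :: nat where "W = fact a * fact b * fact c * fact f"
  have "multinomial n a (Suc b) c * (Suc b * (n - a - b - c - 1)) * W = fact n"
    using multinomial_mult_fact[of a "Suc b" c n] n by (simp add: W_def algebra_simps)
  moreover have "multinomial n a b (c + 2) * ((c + 2) * (c + 1)) * W = fact n"
    using multinomial_mult_fact[of a b "c + 2" n] n
    by (simp add: W_def numeral_2_eq_2 algebra_simps)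
  moreover have "W \<noteq> 0"
    by (simp add: W_def)
  ultimately show ?thesis
    by (metis mult_right_cancel)
qed

lemma prime_not_dvd_multinomial:
  assumes "prime p" "n < p" "a + b + c \<le> n"
  shows "\<not> p dvd multinomial n a b c"
  using multinomial_mult_fact[OF assms(3)] assms(1,2)
  by (metis dvd_mult2 prime_dvd_fact_iff not_le)

section \<open>Derivatives of powers of a quadratic\<close>

lemma coeff_quadratic_power:
  fixes c :: "'a::comm_ring_1"
  shows "coeff ([:c, 0, 1:] ^ M) k
       = (if even k then of_nat (M choose (k div 2)) * c ^ (M - k div 2) else 0)"
proof -
  have quadratic: "[:c, 0, 1:] = monom 1 2 + [:c:]"
    by (simp add: monom_altdef numeral_2_eq_2 one_pCons)
  have "[:c, 0, 1:] ^ M = (\<Sum>h\<le>M. monom (of_nat (M choose h) * c ^ (M - h)) (2 * h))"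
    unfolding quadratic binomial_ring
    by (intro sum.cong refl) (simp add: monom_power of_nat_poly mult_monom flip: monom_0)
  then have "coeff ([:c, 0, 1:] ^ M) k = (\<Sum>h\<le>M. if 2 * h = k then of_nat (M choose h) * c ^ (M - h) else 0)"
    by (simp add: coeff_sum)
  also have "\<dots> = (\<Sum>h\<le>M. if h = k div 2 then (if even k then of_nat (M choose h) * c ^ (M - h) else 0) else 0)"
    by (intro sum.cong refl) auto
  finally show ?thesis
    by (auto simp: binomial_eq_0)
qed

lemma map_poly_of_int_quadratic_power:
  "map_poly (of_int :: int \<Rightarrow> 'a::comm_ring_1) ([:c, 0, 1:] ^ M) = [:of_int c, 0, 1:] ^ M"
  by (rule poly_eqI) (simp add: coeff_map_poly coeff_quadratic_power)

lemma coeff_higher_pderiv_quadratic_power_top: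
  fixes c :: int
  assumes "s + t = 2 * M"
  shows "coeff ((pderiv ^^ t) ([:c, 0, 1:] ^ M)) s = pochhammer (int s + 1) t"
  using assms by (simp add: coeff_higher_pderiv coeff_quadratic_power add.commute)

lemma coeff_higher_pderiv_quadratic_power_nonzero_imp:
  fixes c :: int
  assumes "s + t = 2 * M" "coeff ((pderiv ^^ t) ([:c, 0, 1:] ^ M)) e \<noteq> 0"
  shows "\<exists>d. 2 * d \<le> s \<and> e = s - 2 * d"
proof -
  have "even (e + t)" "(e + t) div 2 \<le> M"
    using assms(2) by (auto simp: coeff_higher_pderiv coeff_quadratic_power binomial_eq_0 split: if_splits)
  moreover define h where "h = (e + t) div 2"
  ultimately have "e + t = 2 * h" "h \<le> M"
    by simp_all
  then have "2 * (M - h) \<le> s \<and> e = s - 2 * (M - h)"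
    using assms(1) by auto
  then show ?thesis
    by blast
qed

lemma diff_mult_binomial_eq: "(n - k) * (n choose k) = Suc k * (n choose Suc k)"
  by (metis binomial_absorb_comp binomial_absorption)

lemma pochhammer_shift_two:
  fixes x :: "'a::comm_semiring_1"
  shows "pochhammer x t * ((x + of_nat t) * (x + of_nat t + 1)) = x * (x + 1) * pochhammer (x + 2) t"
proof -
  have "pochhammer x (Suc (Suc t)) = x * ((x + 1) * pochhammer (x + 2) t)"
    by (simp add: pochhammer_rec add.assoc one_add_one)
  moreover have "pochhammer x (Suc (Suc t)) = (x + of_nat t + 1) * ((x + of_nat t) * pochhammer x t)"
    by (simp add: pochhammer_rec' add_ac)
  ultimately show ?thesis
    by (simp add: mult_ac)
qed

lemma coeff_higher_pderiv_quadratic_power_step: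
  fixes c :: int and t M :: nat
  defines "E \<equiv> (pderiv ^^ t) ([:c, 0, 1:] ^ M)"
  assumes "s + t = 2 * M" "2 * d + 2 \<le> s"
  shows "coeff E (s - 2 * Suc d) * (int (2 * M - 2 * d) * int (2 * M - 2 * d - 1) * int (Suc d))
       = coeff E (s - 2 * d) * (int (s - 2 * d) * int (s - 2 * d - 1) * int (M - d) * c)"
proof -
  obtain k where s: "s = 2 * d + 2 + k"
    using assms(3) le_Suc_ex by blast
  define h where "h = M - Suc d"
  have M: "M = h + Suc d"
    using assms(2) s h_def by simp
  have t: "k + t = 2 * h"
    using assms(2) s M by simp
  have E_k: "coeff E k = pochhammer (int k + 1) t * (int (M choose h) * c ^ (M - h))"
    using t by (simp add: E_def coeff_higher_pderiv coeff_quadratic_power add.commute)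
  have E_k2: "coeff E (k + 2) = pochhammer (int k + 3) t * (int (M choose Suc h) * c ^ (M - Suc h))"
    using t by (simp add: E_def coeff_higher_pderiv coeff_quadratic_power algebra_simps)
  have binomial_shift: "int (M choose h) * int (M - h) = int (M choose Suc h) * int (Suc h)"
    using diff_mult_binomial_eq[of M h] by (metis mult.commute of_nat_mult)
  have c_power: "c ^ (M - h) = c ^ (M - Suc h) * c"
    using M by (simp add: Suc_diff_le)
  have "coeff E k * (int (k + t + 2) * int (k + t + 1) * int (M - h))
      = (pochhammer (int k + 1) t * ((int k + 1 + int t) * (int k + 1 + int t + 1)))
        * (int (M choose h) * int (M - h)) * c ^ (M - h)"
    by (simp add: E_k algebra_simps)
  also have "\<dots> = (int k + 1) * (int k + 1 + 1) * pochhammer (int k + 1 + 2) t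
        * (int (M choose Suc h) * int (Suc h)) * (c ^ (M - Suc h) * c)"
    unfolding pochhammer_shift_two binomial_shift c_power ..
  also have "\<dots> = coeff E (k + 2) * (int (k + 2) * int (k + 1) * int (Suc h) * c)"
    unfolding E_k2 by (simp add: algebra_simps)
  finally show ?thesis
    using s M t by (simp add: numeral_eq_Suc)
qed

lemma prime_not_dvd_pochhammer:
  assumes "prime p" "s + t < p"
  shows "\<not> int p dvd pochhammer (int s + 1) t"
proof
  assume "int p dvd pochhammer (int s + 1) t"
  then obtain i where "i < t" "int p dvd int s + 1 + int i"
    using assms(1) by (auto simp: pochhammer_prod prime_dvd_prod_iff)
  then show False
    using assms by (auto dest!: zdvd_imp_le)
qed

section \<open>Comparing coefficients modulo p\<close>

lemma cong_proportional_of_ratios: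
  fixes \<alpha> \<beta> U V U' V' :: "nat \<Rightarrow> int" and p :: int
  assumes "\<And>d. d < N \<Longrightarrow> \<alpha> (Suc d) * U d = \<alpha> d * V d"
    and "\<And>d. d < N \<Longrightarrow> \<beta> (Suc d) * U' d = \<beta> d * V' d"
    and "\<And>d. d < N \<Longrightarrow> [V d * U' d = V' d * U d] (mod p)"
    and "\<And>d. d < N \<Longrightarrow> coprime (U d * U' d) p"
    and "d \<le> N"
  shows "[\<alpha> d * \<beta> 0 = \<beta> d * \<alpha> 0] (mod p)"
  using \<open>d \<le> N\<close>
proof (induction d)
  case (Suc d)
  then have d: "d < N" and IH: "[\<alpha> d * \<beta> 0 = \<beta> d * \<alpha> 0] (mod p)"
    by simp_all
  have "[\<alpha> (Suc d) * \<beta> 0 * (U d * U' d) = (\<alpha> d * V d) * (\<beta> 0 * U' d)] (mod p)"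
    unfolding assms(1)[OF d, symmetric] by (simp add: mult_ac)
  also have "(\<alpha> d * V d) * (\<beta> 0 * U' d) = (\<alpha> d * \<beta> 0) * (V d * U' d)"
    by (simp add: mult_ac)
  also have "[(\<alpha> d * \<beta> 0) * (V d * U' d) = (\<beta> d * \<alpha> 0) * (V' d * U d)] (mod p)"
    using IH assms(3)[OF d] by (rule cong_mult)
  also have "(\<beta> d * \<alpha> 0) * (V' d * U d) = (\<beta> d * V' d) * (\<alpha> 0 * U d)"
    by (simp add: mult_ac)
  also have "\<dots> = \<beta> (Suc d) * \<alpha> 0 * (U d * U' d)"
    unfolding assms(2)[OF d, symmetric] by (simp add: mult_ac)
  finally show ?case
    using cong_mult_rcancel[OF assms(4)[OF d]] by blast
qed (simp add: mult.commute)

lemma coprime_of_nat_less_prime: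
  assumes "prime p" "0 < x" "x < p"
  shows "coprime (int x) (int p)"
  using assms by (metis coprime_commute nat_dvd_not_less prime_imp_coprime coprime_int_iff)

(* The two ratios agree because b * f = 0 turns (b + d + 1) (f + d + 1) into (d + 1) (b + f + d + 1). *)
lemma cong_multinomial_ratio_pderiv_ratio:
  fixes b f M d n :: nat
  assumes "b * f = 0" "n = 2 * M + 2 * b + 2 * f" "d < M"
  shows "[int (2 * M - 2 * d) * int (2 * M - 2 * d - 1) * int (Suc d)
        = - 4 * int (M - d) * (int (b + d + 1) * int (f + d + 1))] (mod int (n + 1))"
proof -
  have "int (M - d) = int M - int d" "int (2 * M - 2 * d) = 2 * int M - 2 * int d"
    "int (2 * M - 2 * d - 1) = 2 * int M - 2 * int d - 1"
    using assms(3) by arith+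
  moreover have "b = 0 \<or> f = 0"
    using assms(1) by simp
  ultimately have "int (2 * M - 2 * d) * int (2 * M - 2 * d - 1) * int (Suc d)
      - - 4 * int (M - d) * (int (b + d + 1) * int (f + d + 1)) = int (n + 1) * (2 * int (M - d) * int (Suc d))"
    using assms(2) by (auto simp: algebra_simps)
  then show ?thesis
    unfolding cong_iff_dvd_diff by simp
qed

lemma multinomial_cong_coeff_higher_pderiv:
  fixes n a b0 s t M :: nat
  defines "E \<equiv> (pderiv ^^ t) ([:-4, 0, 1:] ^ M)"
  assumes prime: "prime (n + 1)"
    and le: "a + b0 + s \<le> n" and b0: "b0 = 0 \<or> a + b0 + s = n"
    and st: "s + t = 2 * M" and tn: "t + n = 2 * a + s"
    and "d \<le> s div 2"
  shows "[int (multinomial n a (b0 + d) (s - 2 * d)) * coeff E s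
        = coeff E (s - 2 * d) * int (multinomial n a b0 s)] (mod int (n + 1))"
proof -
  define f0 where "f0 = n - a - b0 - s"
  define \<alpha> \<beta> U V U' V' where
    "\<alpha> d = int (multinomial n a (b0 + d) (s - 2 * d))" and "\<beta> d = coeff E (s - 2 * d)"
    and "U d = int (b0 + d + 1) * int (f0 + d + 1)" and "V d = int (s - 2 * d) * int (s - 2 * d - 1)"
    and "U' d = int (2 * M - 2 * d) * int (2 * M - 2 * d - 1) * int (Suc d)"
    and "V' d = V d * (- 4 * int (M - d))" for d
  have "[\<alpha> d * \<beta> 0 = \<beta> d * \<alpha> 0] (mod int (n + 1))"
  proof (rule cong_proportional_of_ratios[OF _ _ _ _ \<open>d \<le> s div 2\<close>])
    fix d assume "d < s div 2"
    then have d: "2 * d + 2 \<le> s"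
      by linarith
    then obtain k where s: "s = 2 * d + 2 + k"
      using le_Suc_ex by blast
    have "n - a - (b0 + d) - k - 1 = f0 + d + 1"
      using le s unfolding f0_def by arith
    then have "multinomial n a (Suc (b0 + d)) k * (Suc (b0 + d) * (f0 + d + 1))
        = multinomial n a (b0 + d) (k + 2) * ((k + 2) * (k + 1))"
      using multinomial_shift[of a "b0 + d" k n] le s by simp
    then have "int (multinomial n a (Suc (b0 + d)) k) * (int (b0 + d + 1) * int (f0 + d + 1))
        = int (multinomial n a (b0 + d) (k + 2)) * (int (k + 2) * int (k + 1))"
      unfolding Suc_eq_plus1 of_nat_mult[symmetric] by (rule arg_cong)
    then show "\<alpha> (Suc d) * U d = \<alpha> d * V d"
      using s by (simp add: \<alpha>_def U_def V_def)
    show "\<beta> (Suc d) * U' d = \<beta> d * V' d"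
      using coeff_higher_pderiv_quadratic_power_step[OF st d]
      by (simp add: \<beta>_def U'_def V'_def V_def E_def mult_ac)
    have "[U' d = - 4 * int (M - d) * U d] (mod int (n + 1))"
      unfolding U_def U'_def
    proof (rule cong_multinomial_ratio_pderiv_ratio)
      show "b0 * f0 = 0" "n = 2 * M + 2 * b0 + 2 * f0" "d < M"
        using st tn le b0 d unfolding f0_def by auto
    qed
    then show "[V d * U' d = V' d * U d] (mod int (n + 1))"
      unfolding V'_def mult.assoc by (rule cong_scalar_left)
    show "coprime (U d * U' d) (int (n + 1))"
      using d le st tn unfolding U_def U'_def coprime_mult_left_iff f0_def
      by (intro conjI coprime_of_nat_less_prime[OF prime]) auto
  qed
  then show ?thesis
    by (simp add: \<alpha>_def \<beta>_def)
qed

lemma coeff_Fpol_power_cong_higher_pderiv: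
  fixes n a b0 s t M :: nat
  defines "C \<equiv> mcoeff (Fpol ^ n) (3 * a) (4 * b0 + 2 * s) (a + 2 * s + 4 * (n - a - b0 - s))"
    and "E \<equiv> (pderiv ^^ t) ([:-4, 0, 1:] ^ M)"
  assumes "prime (n + 1)" "a + b0 + s \<le> n" "b0 = 0 \<or> a + b0 + s = n"
    and "s + t = 2 * M" "t + n = 2 * a + s"
  shows "[coeff C e * coeff E s = coeff E e * int (multinomial n a b0 s)] (mod int (n + 1))"
proof (cases "\<exists>d. 2 * d \<le> s \<and> e = s - 2 * d")
  case True
  then obtain d where "2 * d \<le> s" "e = s - 2 * d"
    by blast
  then show ?thesis
    using multinomial_cong_coeff_higher_pderiv[OF assms(3-7), of d] coeff_Fpol_power_eq_multinomial[OF assms(4)]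
    unfolding C_def E_def by simp
next
  case False
  then have "coeff C e = 0" "coeff E e = 0"
    using coeff_Fpol_power_nonzero_imp[OF assms(4,5)] coeff_higher_pderiv_quadratic_power_nonzero_imp[OF assms(6)]
    unfolding C_def E_def by blast+
  then show ?thesis
    by simp
qed

lemma c1_cong:
  assumes "prime (6 * m + 1)"
  shows "[coeff (c1 (6 * m + 1)) e * pochhammer (int m + 1) (3 * m)
        = coeff ((pderiv ^^ (3 * m)) ([:-4, 0, 1:] ^ (2 * m))) e * int (multinomial (6 * m) (4 * m) m m)]
         (mod int (6 * m + 1))"
  using coeff_Fpol_power_cong_higher_pderiv[of "6 * m" "4 * m" m m "3 * m" "2 * m" e] assms
  by (simp add: c1_def mcoeff_def coeff_higher_pderiv_quadratic_power_top)

lemma c2_cong: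
  assumes "prime (6 * m + 1)"
  shows "[coeff (c2 (6 * m + 1)) e = coeff ([:-4, 0, 1:] ^ m) e * int (multinomial (6 * m) (2 * m) (2 * m) (2 * m))]
         (mod int (6 * m + 1))"
  using coeff_Fpol_power_cong_higher_pderiv[of "6 * m" "2 * m" "2 * m" "2 * m" 0 m e] assms
  by (simp add: c2_def mcoeff_def coeff_quadratic_power)

lemma c3_cong:
  assumes "prime (6 * m + 1)"
  shows "[coeff (c3 (6 * m + 1)) e * pochhammer (3 * int m + 1) m
        = coeff ((pderiv ^^ m) ([:-4, 0, 1:] ^ (2 * m))) e * int (multinomial (6 * m) (2 * m) 0 (3 * m))]
         (mod int (6 * m + 1))"
  using coeff_Fpol_power_cong_higher_pderiv[of "6 * m" "2 * m" 0 "3 * m" m "2 * m" e] assms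
  by (simp add: c3_def mcoeff_def coeff_higher_pderiv_quadratic_power_top)

section \<open>A Rodrigues-type identity\<close>

lemma higher_pderiv_mult:
  fixes f g :: "'a::idom poly"
  shows "(pderiv ^^ n) (f * g)
       = (\<Sum>i\<le>n. smult (of_nat (n choose i)) ((pderiv ^^ i) f * (pderiv ^^ (n - i)) g))"
proof (induction n)
  case (Suc n)
  have pderiv_sum: "pderiv (sum h A) = (\<Sum>x\<in>A. pderiv (h x))" for h :: "nat \<Rightarrow> 'a poly" and A
    using higher_pderiv_sum[of 1 h A] by simp
  define X where "X i = (pderiv ^^ i) f * (pderiv ^^ (Suc n - i)) g" for i
  have "(pderiv ^^ Suc n) (f * g)
      = (\<Sum>i\<le>n. smult (of_nat (n choose i)) ((pderiv ^^ Suc i) f * (pderiv ^^ (n - i)) g))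
        + (\<Sum>i\<le>n. smult (of_nat (n choose i)) ((pderiv ^^ i) f * (pderiv ^^ Suc (n - i)) g))"
    by (simp add: Suc pderiv_sum pderiv_smult pderiv_mult sum.distrib smult_add_right algebra_simps)
  also have "(\<Sum>i\<le>n. smult (of_nat (n choose i)) ((pderiv ^^ Suc i) f * (pderiv ^^ (n - i)) g))
      = (\<Sum>i\<le>Suc n. smult (of_nat (if i = 0 then 0 else n choose (i - 1))) (X i))"
    by (subst sum.atMost_Suc_shift) (simp add: X_def)
  also have "(\<Sum>i\<le>n. smult (of_nat (n choose i)) ((pderiv ^^ i) f * (pderiv ^^ Suc (n - i)) g))
      = (\<Sum>i\<le>Suc n. smult (of_nat (n choose i)) (X i))"
    by (simp add: X_def Suc_diff_le binomial_eq_0)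
  also have "(\<Sum>i\<le>Suc n. smult (of_nat (if i = 0 then 0 else n choose (i - 1))) (X i))
      + (\<Sum>i\<le>Suc n. smult (of_nat (n choose i)) (X i))
      = (\<Sum>i\<le>Suc n. smult (of_nat (Suc n choose i)) (X i))"
    unfolding sum.distrib[symmetric]
  proof (intro sum.cong refl)
    show "smult (of_nat (if i = 0 then 0 else n choose (i - 1))) (X i) + smult (of_nat (n choose i)) (X i)
        = smult (of_nat (Suc n choose i)) (X i)" for i
      by (cases i) (simp_all add: smult_add_left)
  qed
  finally show ?case
    by (simp add: X_def)
qed simp

definition falling_factorial :: "nat \<Rightarrow> nat \<Rightarrow> nat" where
  "falling_factorial n i = (n choose i) * fact i"

lemma falling_factorial_mult_fact: "i \<le> n \<Longrightarrow> falling_factorial n i * fact (n - i) = fact n"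
  unfolding falling_factorial_def using binomial_fact_lemma[of i n] by (simp add: algebra_simps)

lemma falling_factorial_eq_0: "n < i \<Longrightarrow> falling_factorial n i = 0"
  by (simp add: falling_factorial_def)

lemma higher_pderiv_linear_power:
  fixes c :: "'a::idom"
  shows "(pderiv ^^ i) ([:c, 1:] ^ n) = smult (of_nat (falling_factorial n i)) ([:c, 1:] ^ (n - i))"
proof (induction i)
  case (Suc i)
  have "falling_factorial n i * (n - i) = falling_factorial n (Suc i)"
    using diff_mult_binomial_eq[of n i] unfolding falling_factorial_def by (simp add: algebra_simps)
  then show ?case
    using Suc by (simp add: pderiv_smult pderiv_power pderiv_pCons smult_smult flip: of_nat_mult)
qed (simp add: falling_factorial_def)

lemma higher_pderiv_linear_powers_mult:
  fixes a b :: "'a::idom"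
  shows "(pderiv ^^ s) ([:a, 1:] ^ n * [:b, 1:] ^ n) = (\<Sum>j\<le>s.
     smult (of_nat ((s choose j) * falling_factorial n j * falling_factorial n (s - j)))
       ([:a, 1:] ^ (n - j) * [:b, 1:] ^ (n - (s - j))))"
  unfolding higher_pderiv_mult higher_pderiv_linear_power
  by (simp add: mult_smult_left mult_smult_right smult_smult mult_ac)

lemma fact_mult_falling_factorials_symmetry:
  assumes "j + k \<le> n"
  shows "fact (n + k) * (((n - k) choose j) * falling_factorial n j * falling_factorial n (n - (k + j)))
       = fact (n - k) * (((n + k) choose (j + k)) * falling_factorial n (j + k) * falling_factorial n (n - j))"
proof -
  define W :: nat where "W = fact (n - j) * fact (j + k) * fact (n - (k + j)) * fact j"
  have binomials: "fact j * fact (n - (k + j)) * ((n - k) choose j) = fact (n - k)"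
    "fact (j + k) * fact (n - j) * ((n + k) choose (j + k)) = fact (n + k)"
    using assms binomial_fact_lemma[of j "n - k"] binomial_fact_lemma[of "j + k" "n + k"] by simp_all
  have fallings: "falling_factorial n j * fact (n - j) = fact n"
    "falling_factorial n (n - (k + j)) * fact (j + k) = fact n"
    "falling_factorial n (j + k) * fact (n - (k + j)) = fact n"
    "falling_factorial n (n - j) * fact j = fact n"
    using assms falling_factorial_mult_fact[of j n] falling_factorial_mult_fact[of "n - (k + j)" n]
      falling_factorial_mult_fact[of "j + k" n] falling_factorial_mult_fact[of "n - j" n]
    by (simp_all add: add.commute)
  have "fact (n + k) * (((n - k) choose j) * falling_factorial n j * falling_factorial n (n - (k + j))) * W
      = fact (n + k) * (fact j * fact (n - (k + j)) * ((n - k) choose j))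
        * (falling_factorial n j * fact (n - j)) * (falling_factorial n (n - (k + j)) * fact (j + k))"
    unfolding W_def by (simp only: mult_ac)
  also have "\<dots> = fact (n - k) * (fact (j + k) * fact (n - j) * ((n + k) choose (j + k)))
        * (falling_factorial n (j + k) * fact (n - (k + j))) * (falling_factorial n (n - j) * fact j)"
    unfolding binomials fallings by (simp only: mult_ac)
  also have "\<dots> = fact (n - k) * (((n + k) choose (j + k)) * falling_factorial n (j + k) * falling_factorial n (n - j)) * W"
    unfolding W_def by (simp only: mult_ac)
  finally show ?thesis
    by (simp add: W_def)
qed

lemma linear_product_power_mult_higher_pderiv:
  fixes a b :: "'a::idom"
  defines "Z \<equiv> [:a, 1:] * [:b, 1:]"
  assumes kn: "k \<le> n"
  shows "Z ^ k * (pderiv ^^ (n + k)) (Z ^ n) = (\<Sum>j\<le>n - k.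
     smult (of_nat (((n + k) choose (j + k)) * falling_factorial n (j + k) * falling_factorial n (n - j)))
       ([:a, 1:] ^ (n - j) * [:b, 1:] ^ (j + k)))"
proof -
  define A B where "A = [:a, 1:]" and "B = [:b, 1:]"
  define g where "g i = smult (of_nat (((n + k) choose i) * falling_factorial n i * falling_factorial n (n + k - i)))
    (A ^ k * B ^ k * (A ^ (n - i) * B ^ (n - (n + k - i))))" for i
  have "Z ^ k * (pderiv ^^ (n + k)) (Z ^ n) = (\<Sum>i\<le>n + k. g i)"
    unfolding Z_def power_mult_distrib higher_pderiv_linear_powers_mult sum_distrib_left
    by (simp add: g_def A_def B_def mult_smult_right)
  also have "\<dots> = (\<Sum>i\<in>{k..n}. g i)"
    by (rule sum.mono_neutral_right) (auto simp: g_def falling_factorial_eq_0)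
  also have "\<dots> = (\<Sum>j\<le>n - k. g (j + k))"
    using sum.shift_bounds_cl_nat_ivl[of g 0 k "n - k"] kn by (simp add: atLeast0AtMost)
  also have "\<dots> = (\<Sum>j\<le>n - k.
     smult (of_nat (((n + k) choose (j + k)) * falling_factorial n (j + k) * falling_factorial n (n - j)))
       (A ^ (n - j) * B ^ (j + k)))"
  proof (intro sum.cong refl)
    fix j assume "j \<in> {..n - k}"
    then have "n - j = k + (n - (j + k))" "n - (n + k - (j + k)) = j"
      using kn by auto
    then have "A ^ k * B ^ k * (A ^ (n - (j + k)) * B ^ (n - (n + k - (j + k)))) = A ^ (n - j) * B ^ (j + k)"
      by (simp only: power_add) (simp add: mult_ac)
    then show "g (j + k) = smult (of_nat (((n + k) choose (j + k)) * falling_factorial n (j + k)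
        * falling_factorial n (n - j))) (A ^ (n - j) * B ^ (j + k))"
      by (simp add: g_def)
  qed
  finally show ?thesis
    by (simp add: A_def B_def)
qed

lemma higher_pderiv_linear_product_power_symmetry:
  fixes a b :: "'a::idom"
  defines "Z \<equiv> [:a, 1:] * [:b, 1:]"
  assumes kn: "k \<le> n"
  shows "smult (of_nat (fact (n + k))) ((pderiv ^^ (n - k)) (Z ^ n))
       = smult (of_nat (fact (n - k))) (Z ^ k * (pderiv ^^ (n + k)) (Z ^ n))"
proof -
  have smult_sum_right: "smult x (sum f S) = (\<Sum>i\<in>S. smult x (f i))" for x and f :: "nat \<Rightarrow> 'a poly" and S
    by (induct S rule: infinite_finite_induct) (simp_all add: smult_add_right)
  have lower: "(pderiv ^^ (n - k)) (Z ^ n) = (\<Sum>j\<le>n - k.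
     smult (of_nat (((n - k) choose j) * falling_factorial n j * falling_factorial n (n - k - j)))
       ([:a, 1:] ^ (n - j) * [:b, 1:] ^ (j + k)))"
    unfolding Z_def power_mult_distrib higher_pderiv_linear_powers_mult
    using kn by (intro sum.cong refl) (simp add: add.commute)
  show ?thesis
    unfolding lower linear_product_power_mult_higher_pderiv[OF kn, of a b, folded Z_def] smult_sum_right smult_smult
    using kn by (intro sum.cong refl) (simp add: fact_mult_falling_factorials_symmetry flip: of_nat_mult)
qed

lemma const_poly_dvd_diff_iff_cong:
  fixes A B :: "int poly"
  shows "[:P:] dvd A - B \<longleftrightarrow> (\<forall>i. [coeff A i = coeff B i] (mod P))"
  by (simp add: const_poly_dvd_iff cong_iff_dvd_diff)

lemma dvd_diff_mult_of_congruent_multiples: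
  fixes \<pi> :: "'a::comm_ring_1"
  assumes "\<pi> dvd b1 * A - a1 * E1" "\<pi> dvd b3 * B - a3 * E3" "F3 * E3 = FM * (Z * E1)"
    and "\<pi> dvd 1 - u * b3 * F3 * a1"
  shows "\<pi> dvd B - A * (u * a3 * FM * b1 * Z)"
proof -
  have "B - A * (u * a3 * FM * b1 * Z)
      = (1 - u * b3 * F3 * a1) * B + u * F3 * a1 * (b3 * B - a3 * E3)
        + u * a3 * a1 * (F3 * E3 - FM * (Z * E1)) - u * a3 * FM * Z * (b1 * A - a1 * E1)"
    by (simp add: algebra_simps)
  then show ?thesis
    using assms by (simp add: dvd_add dvd_diff dvd_mult dvd_mult2)
qed

lemma c1_dvd_c3_mod:
  assumes "prime (6 * m + 1)"
  shows "\<exists>q. \<forall>i. [coeff (c3 (6 * m + 1)) i = coeff (c1 (6 * m + 1) * q) i] (mod int (6 * m + 1))"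
proof -
  define P where "P = int (6 * m + 1)"
  define Z :: "int poly" where "Z = [:-4, 0, 1:]"
  define E1 E3 where "E1 = (pderiv ^^ (3 * m)) (Z ^ (2 * m))" and "E3 = (pderiv ^^ m) (Z ^ (2 * m))"
  define a1 b1 a3 b3 where "a1 = int (multinomial (6 * m) (4 * m) m m)" and "b1 = pochhammer (int m + 1) (3 * m)"
    and "a3 = int (multinomial (6 * m) (2 * m) 0 (3 * m))" and "b3 = pochhammer (3 * int m + 1) m"
  define F3 FM where "F3 = int (fact (3 * m))" and "FM = int (fact m)"
  have prime: "prime P"
    using assms unfolding P_def by (simp only: prime_nat_int_transfer)
  have "\<not> P dvd b3"
    using prime_not_dvd_pochhammer[of "6 * m + 1" "3 * m" m] assms by (simp add: P_def b3_def)
  moreover have "\<not> P dvd F3"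
    using prime_dvd_fact_iff[of "6 * m + 1" "3 * m"] assms unfolding P_def F3_def int_dvd_int_iff by simp
  moreover have "\<not> P dvd a1"
    using prime_not_dvd_multinomial[of "6 * m + 1" "6 * m" "4 * m" m m] assms
    unfolding P_def a1_def int_dvd_int_iff by simp
  ultimately have "coprime (b3 * F3 * a1) P"
    using prime by (auto simp: coprime_commute[of _ P] intro!: prime_imp_coprime)
  then obtain u where "[b3 * F3 * a1 * u = 1] (mod P)"
    using cong_solve_coprime_int by blast
  then have "[:P:] dvd 1 - [:u:] * [:b3:] * [:F3:] * [:a1:]"
    by (simp add: const_poly_dvd_iff cong_iff_dvd_diff dvd_diff_commute coeff_pCons mult_ac split: nat.split)
  moreover have "[:P:] dvd [:b1:] * c1 (6 * m + 1) - [:a1:] * E1"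
    using c1_cong[OF assms] unfolding const_poly_dvd_diff_iff_cong
    by (simp add: P_def E1_def Z_def a1_def b1_def mult.commute)
  moreover have "[:P:] dvd [:b3:] * c3 (6 * m + 1) - [:a3:] * E3"
    using c3_cong[OF assms] unfolding const_poly_dvd_diff_iff_cong
    by (simp add: P_def E3_def Z_def a3_def b3_def mult.commute)
  moreover have "[:F3:] * E3 = [:FM:] * (Z ^ m * E1)"
    using higher_pderiv_linear_product_power_symmetry[where a = "-2 :: int" and b = 2 and k = m and n = "2 * m"]
    by (simp add: F3_def FM_def E1_def E3_def Z_def)
  ultimately have "[:P:] dvd c3 (6 * m + 1) - c1 (6 * m + 1) * ([:u:] * [:a3:] * [:FM:] * [:b1:] * Z ^ m)"
    by (intro dvd_diff_mult_of_congruent_multiples)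
  then show ?thesis
    unfolding const_poly_dvd_diff_iff_cong P_def by blast
qed

lemma c2_roots:
  fixes r :: "'a::field"
  assumes "prime (6 * m + 1)" "CHAR('a) = 6 * m + 1"
  shows "poly (map_poly of_int (c2 (6 * m + 1))) r = 0 \<longleftrightarrow> r = 2 \<or> r = - 2"
proof -
  define a2 where "a2 = multinomial (6 * m) (2 * m) (2 * m) (2 * m)"
  have "map_poly (of_int :: int \<Rightarrow> 'a) (c2 (6 * m + 1)) = map_poly of_int (smult (int a2) ([:-4, 0, 1:] ^ m))"
  proof (rule poly_eqI)
    fix e
    have "(of_int (coeff (c2 (6 * m + 1)) e) :: 'a) = of_int (coeff ([:-4, 0, 1:] ^ m) e * int a2)"
      unfolding of_int_eq_iff_cong_CHAR assms(2) a2_def by (rule c2_cong[OF assms(1)])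
    then show "coeff (map_poly of_int (c2 (6 * m + 1))) e
        = coeff (map_poly (of_int :: int \<Rightarrow> 'a) (smult (int a2) ([:-4, 0, 1:] ^ m))) e"
      by (simp add: coeff_map_poly mult.commute)
  qed
  then have "poly (map_poly of_int (c2 (6 * m + 1))) r = of_nat a2 * ((r - 2) * (r + 2)) ^ m"
    by (simp add: map_poly_smult map_poly_of_int_quadratic_power poly_power algebra_simps)
  moreover have "(of_nat a2 :: 'a) \<noteq> 0"
    using prime_not_dvd_multinomial[of "6 * m + 1" "6 * m" "2 * m" "2 * m" "2 * m"] assms
    by (simp add: of_nat_eq_0_iff_char_dvd a2_def)
  moreover have "m \<noteq> 0"
    using assms(1) by (cases "m = 0") auto
  ultimately show ?thesis
    by (auto simp: eq_neg_iff_add_eq_0)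
qed

theorem proposition3p8:
  fixes p :: nat
  assumes "prime p" and "p \<ge> 5" and "[p = 1] (mod 6)"
  shows "(\<exists>q :: int poly. \<forall>i. [coeff (c3 p) i = coeff (c1 p * q) i] (mod int p))
       \<and> (\<forall>r :: 'a :: field. CHAR('a) = p \<longrightarrow>
            (poly (map_poly of_int (c2 p)) r = 0 \<longleftrightarrow> r = 2 \<or> r = - 2))"
proof -
  define m where "m = p div 6"
  have p: "p = 6 * m + 1"
    using assms(3) div_mult_mod_eq[of p 6] unfolding cong_def m_def by simp
  with assms(1) have prime: "prime (6 * m + 1)"
    by simp
  show ?thesis
    unfolding p using c1_dvd_c3_mod[OF prime] c2_roots[OF prime] by blast
qed

end
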